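(* Let $X$ be compact and $\alpha$ a standard cocycle representing $a$. Then $\|\widehat g\|_\alpha=\sup_{x\in X}|\rho_{x,\alpha}(\widehat g)|$ is finite for every $\widehat g\in\widehat G_a$, and $\|\cdot\|_\alpha$ is a seminorm on $\widehat G_a$: $\|\widehat g^{-1}\|_\alpha=\|\widehat g\|_\alpha$ and $\|\widehat g\widehat h\|_\alpha\le\|\widehat g\|_\alpha+\|\widehat h\|_\alpha$ for all $\widehat g,\widehat h\in\widehat G_a$.
   Context: $A$ is $\mathbb{Z}$ or the discrete group $\mathbb{R}$. $X$ is a path-connected space, $a\in\mathrm{H}^1(X;A)$, $\pi\colon\widehat X_a\to X$ a principal $A$-bundle with holonomy $a$, $T_r$ the action of $r\in A$. $\widehat G_a$ is the group of homeomorphisms $\widehat g$ of $\widehat X_a$ with $\pi\circ\widehat g=g\circ\pi$ for a homeomorphism $g$ of $X$. A real singular $1$-cocycle $\alpha$ representing $a$ is standard if there is a continuous $\theta\colon\widehat X_a\to\mathbb{R}$ with $d\theta=\pi^*\alpha$ and $\theta(T_r\widehat y)=\theta(\widehat y)+r$ for all $\widehat y,r$. Then $\rho_{x,\alpha}(\widehat g)=\theta(\widehat g(\widehat x))-\theta(\widehat x)$ for any $\widehat x\in\pi^{-1}(x)$. *)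

theory Defs
  imports "HOL-Analysis.Analysis" "HOL-Homology.Homology"
begin

definition vtx :: "nat \<Rightarrow> (nat \<Rightarrow> real)" where
  "vtx k = (\<lambda>i. if i = k then 1 else 0)"

text \<open>A path viewed as a singular 1-simplex (vertex 0 goes to gamma 0, vertex 1 to gamma 1).\<close>
definition path_simplex :: "(real \<Rightarrow> 'a) \<Rightarrow> (nat \<Rightarrow> real) \<Rightarrow> 'a" where
  "path_simplex \<gamma> = restrict (\<lambda>t. \<gamma> (t 1)) (standard_simplex 1)"

definition real_1_cocycle :: "'a topology \<Rightarrow> (((nat \<Rightarrow> real) \<Rightarrow> 'a) \<Rightarrow> real) \<Rightarrow> bool" where
  "real_1_cocycle X \<alpha> \<longleftrightarrow>
     (\<forall>\<tau>. singular_simplex 2 X \<tau> \<longrightarrow>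
        \<alpha> (singular_face 2 0 \<tau>) - \<alpha> (singular_face 2 1 \<tau>) + \<alpha> (singular_face 2 2 \<tau>) = 0)"

definition principal_bundle ::
  "real set \<Rightarrow> 'x topology \<Rightarrow> 'y topology \<Rightarrow> ('y \<Rightarrow> 'x) \<Rightarrow> (real \<Rightarrow> 'y \<Rightarrow> 'y) \<Rightarrow> bool" where
  "principal_bundle A X Y \<pi> T \<longleftrightarrow>
     continuous_map Y X \<pi> \<and> \<pi> ` topspace Y = topspace X \<and>
     (\<forall>r\<in>A. homeomorphic_map Y Y (T r)) \<and>
     (\<forall>y\<in>topspace Y. T 0 y = y) \<and>
     (\<forall>r\<in>A. \<forall>s\<in>A. \<forall>y\<in>topspace Y. T (r + s) y = T r (T s y)) \<and>
     (\<forall>r\<in>A. \<forall>y\<in>topspace Y. \<pi> (T r y) = \<pi> y) \<and>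
     (\<forall>x\<in>topspace X. \<exists>U s. openin X U \<and> x \<in> U \<and>
        (\<forall>u\<in>U. s u \<in> topspace Y \<and> \<pi> (s u) = u) \<and>
        homeomorphic_map (prod_topology (subtopology X U) (discrete_topology A))
                         (subtopology Y {y \<in> topspace Y. \<pi> y \<in> U})
                         (\<lambda>(u, r). T r (s u)))"

text \<open>The bundle has holonomy a: a assigns to each loop gamma in X an element of A such that
  every lift of gamma ends at T (a gamma) applied to its starting point.
  (For path-connected X, H^1(X;A) = Hom(H_1 X, A), so a class is determined by its values on loops.)\<close>
definition has_holonomy ::
  "real set \<Rightarrow> 'x topology \<Rightarrow> 'y topology \<Rightarrow> ('y \<Rightarrow> 'x) \<Rightarrow> (real \<Rightarrow> 'y \<Rightarrow> 'y)
     \<Rightarrow> ((real \<Rightarrow> 'x) \<Rightarrow> real) \<Rightarrow> bool" where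
  "has_holonomy A X Y \<pi> T a \<longleftrightarrow>
     (\<forall>\<gamma>. pathin X \<gamma> \<and> \<gamma> 0 = \<gamma> 1 \<longrightarrow>
        a \<gamma> \<in> A \<and>
        (\<forall>\<gamma>'. pathin Y \<gamma>' \<and> (\<forall>t\<in>{0..1}. \<pi> (\<gamma>' t) = \<gamma> t) \<longrightarrow> \<gamma>' 1 = T (a \<gamma>) (\<gamma>' 0)))"

definition represents :: "'x topology \<Rightarrow> (((nat \<Rightarrow> real) \<Rightarrow> 'x) \<Rightarrow> real) \<Rightarrow> ((real \<Rightarrow> 'x) \<Rightarrow> real) \<Rightarrow> bool" where
  "represents X \<alpha> a \<longleftrightarrow> real_1_cocycle X \<alpha> \<and>
     (\<forall>\<gamma>. pathin X \<gamma> \<and> \<gamma> 0 = \<gamma> 1 \<longrightarrow> \<alpha> (path_simplex \<gamma>) = a \<gamma>)"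

text \<open>theta witnesses that alpha is standard: d theta = pi^* alpha, theta(T_r y) = theta y + r.\<close>
definition standard_witness ::
  "real set \<Rightarrow> 'x topology \<Rightarrow> 'y topology \<Rightarrow> ('y \<Rightarrow> 'x) \<Rightarrow> (real \<Rightarrow> 'y \<Rightarrow> 'y)
     \<Rightarrow> (((nat \<Rightarrow> real) \<Rightarrow> 'x) \<Rightarrow> real) \<Rightarrow> ('y \<Rightarrow> real) \<Rightarrow> bool" where
  "standard_witness A X Y \<pi> T \<alpha> \<theta> \<longleftrightarrow>
     continuous_map Y euclideanreal \<theta> \<and>
     (\<forall>\<sigma>. singular_simplex 1 Y \<sigma> \<longrightarrow>
        \<alpha> (simplex_map 1 \<pi> \<sigma>) = \<theta> (\<sigma> (vtx 1)) - \<theta> (\<sigma> (vtx 0))) \<and>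
     (\<forall>r\<in>A. \<forall>y\<in>topspace Y. \<theta> (T r y) = \<theta> y + r)"

definition standard_cocycle ::
  "real set \<Rightarrow> 'x topology \<Rightarrow> 'y topology \<Rightarrow> ('y \<Rightarrow> 'x) \<Rightarrow> (real \<Rightarrow> 'y \<Rightarrow> 'y)
     \<Rightarrow> ((real \<Rightarrow> 'x) \<Rightarrow> real) \<Rightarrow> (((nat \<Rightarrow> real) \<Rightarrow> 'x) \<Rightarrow> real) \<Rightarrow> bool" where
  "standard_cocycle A X Y \<pi> T a \<alpha> \<longleftrightarrow>
     represents X \<alpha> a \<and> (\<exists>\<theta>. standard_witness A X Y \<pi> T \<alpha> \<theta>)"

text \<open>The group hat G_a: homeomorphisms of Y covering a homeomorphism of X
  and commuting with the A-action (automorphisms of the principal bundle).\<close>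
definition lift_group ::
  "real set \<Rightarrow> 'x topology \<Rightarrow> 'y topology \<Rightarrow> ('y \<Rightarrow> 'x) \<Rightarrow> (real \<Rightarrow> 'y \<Rightarrow> 'y) \<Rightarrow> ('y \<Rightarrow> 'y) set" where
  "lift_group A X Y \<pi> T =
     {gh. homeomorphic_map Y Y gh \<and>
          (\<exists>g. homeomorphic_map X X g \<and> (\<forall>y\<in>topspace Y. \<pi> (gh y) = g (\<pi> y))) \<and>
          (\<forall>r\<in>A. \<forall>y\<in>topspace Y. gh (T r y) = T r (gh y))}"

definition rot :: "'y topology \<Rightarrow> ('y \<Rightarrow> 'x) \<Rightarrow> ('y \<Rightarrow> real) \<Rightarrow> 'x \<Rightarrow> ('y \<Rightarrow> 'y) \<Rightarrow> real" where
  "rot Y \<pi> \<theta> x gh = (let xh = (SOME y. y \<in> topspace Y \<and> \<pi> y = x) in \<theta> (gh xh) - \<theta> xh)"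

definition lift_norm :: "'x topology \<Rightarrow> 'y topology \<Rightarrow> ('y \<Rightarrow> 'x) \<Rightarrow> ('y \<Rightarrow> real) \<Rightarrow> ('y \<Rightarrow> 'y) \<Rightarrow> real" where
  "lift_norm X Y \<pi> \<theta> gh = (SUP x\<in>topspace X. \<bar>rot Y \<pi> \<theta> x gh\<bar>)"

end

theory Submission
  imports Defs
begin

text \<open>
  For a bundle automorphism \<open>k\<close>, the displacement \<open>\<theta> (k y) - \<theta> y\<close> does not change when \<open>y\<close>
  is moved along its fibre, because \<open>\<theta>\<close> and \<open>k\<close> are both equivariant and the fibres are
  \<open>A\<close>-orbits. Hence \<open>\<rho>\<^sub>x(k)\<close> is this displacement at any point over \<open>x\<close>. Composition adds
  displacements and inversion negates them (at a shifted base point), which gives the triangle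
  inequality and the invariance of the norm under inversion. Finiteness comes from compactness:
  over a local section \<open>\<sigma>\<close>, \<open>\<rho>\<^sub>x(k) = \<theta> (k (\<sigma> x)) - \<theta> (\<sigma> x)\<close> is continuous in \<open>x\<close>.
\<close>

lemma continuous_map_from_local:
  assumes "\<And>x. x \<in> topspace X \<Longrightarrow> \<exists>U. openin X U \<and> x \<in> U \<and> continuous_map (subtopology X U) Y f"
  shows "continuous_map X Y f"
proof -
  define U where "U x = (SOME U. openin X U \<and> x \<in> U \<and> continuous_map (subtopology X U) Y f)" for x
  have U: "openin X (U x) \<and> x \<in> U x \<and> continuous_map (subtopology X (U x)) Y f"
    if "x \<in> topspace X" for x
    using someI_ex[OF assms[OF that]] unfolding U_def .
  show ?thesis
    by (rule pasting_lemma[where I = "topspace X" and T = U and f = "\<lambda>_. f"]) (use U in auto)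
qed

lemma principal_bundle_projection_in_base:
  assumes "principal_bundle A X Y \<pi> T" "y \<in> topspace Y"
  shows "\<pi> y \<in> topspace X"
  using assms unfolding principal_bundle_def by blast

lemma principal_bundle_fibre_nonempty:
  assumes "principal_bundle A X Y \<pi> T" "x \<in> topspace X"
  obtains y where "y \<in> topspace Y" "\<pi> y = x"
  using assms unfolding principal_bundle_def by blast

lemma principal_bundle_action_in_total:
  assumes "principal_bundle A X Y \<pi> T" "r \<in> A" "y \<in> topspace Y"
  shows "T r y \<in> topspace Y"
proof -
  have "homeomorphic_map Y Y (T r)" using assms unfolding principal_bundle_def by blast
  then show ?thesis using assms(3) homeomorphic_imp_surjective_map by blast
qed

lemma principal_bundle_local_trivialization:
  assumes pb: "principal_bundle A X Y \<pi> T" and x: "x \<in> topspace X"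
  obtains U s where "openin X U" "x \<in> U"
    "\<And>u. u \<in> U \<Longrightarrow> s u \<in> topspace Y \<and> \<pi> (s u) = u"
    "\<And>y. \<lbrakk>y \<in> topspace Y; \<pi> y \<in> U\<rbrakk> \<Longrightarrow> \<exists>r\<in>A. y = T r (s (\<pi> y))"
    "\<And>r. r \<in> A \<Longrightarrow> continuous_map (subtopology X U) Y (\<lambda>u. T r (s u))"
proof -
  have "\<exists>U s. openin X U \<and> x \<in> U \<and> (\<forall>u\<in>U. s u \<in> topspace Y \<and> \<pi> (s u) = u) \<and>
      homeomorphic_map (prod_topology (subtopology X U) (discrete_topology A))
        (subtopology Y {y \<in> topspace Y. \<pi> y \<in> U}) (\<lambda>(u, r). T r (s u))"
    using pb x unfolding principal_bundle_def by blast
  then obtain U s where U: "openin X U" "x \<in> U" and s: "\<And>u. u \<in> U \<Longrightarrow> s u \<in> topspace Y \<and> \<pi> (s u) = u"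
    and triv: "homeomorphic_map (prod_topology (subtopology X U) (discrete_topology A))
                 (subtopology Y {y \<in> topspace Y. \<pi> y \<in> U}) (\<lambda>(u, r). T r (s u))"
    by blast
  have \<pi>T: "\<pi> (T r y) = \<pi> y" if "r \<in> A" "y \<in> topspace Y" for r y
    using pb that unfolding principal_bundle_def by blast
  have onto: "(\<lambda>(u, r). T r (s u)) ` ((topspace X \<inter> U) \<times> A) = {y \<in> topspace Y. \<pi> y \<in> U}"
    using homeomorphic_imp_surjective_map[OF triv] by auto
  have orbit: "\<exists>r\<in>A. y = T r (s (\<pi> y))" if "y \<in> topspace Y" "\<pi> y \<in> U" for y
  proof -
    have "y \<in> (\<lambda>(u, r). T r (s u)) ` ((topspace X \<inter> U) \<times> A)" using onto that by blast
    then obtain u r where "u \<in> U" "r \<in> A" "y = T r (s u)" by auto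
    moreover have "\<pi> y = u" using calculation \<pi>T s by simp
    ultimately show ?thesis by auto
  qed
  have "continuous_map (subtopology X U) Y (\<lambda>u. T r (s u))" if r: "r \<in> A" for r
  proof -
    have "continuous_map (subtopology X U) (prod_topology (subtopology X U) (discrete_topology A)) (\<lambda>u. (u, r))"
      using r by (intro continuous_map_pairedI) auto
    from continuous_map_compose[OF this homeomorphic_imp_continuous_map[OF triv]]
    show ?thesis by (simp add: o_def continuous_map_in_subtopology)
  qed
  with U s orbit show thesis using that by blast
qed

lemma principal_bundle_local_section:
  assumes pb: "principal_bundle A X Y \<pi> T" and x: "x \<in> topspace X"
  obtains U \<sigma> where "openin X U" "x \<in> U" "continuous_map (subtopology X U) Y \<sigma>"
    "\<And>u. u \<in> U \<Longrightarrow> \<pi> (\<sigma> u) = u"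
proof -
  obtain U s where U: "openin X U" "x \<in> U" and s: "\<And>u. u \<in> U \<Longrightarrow> s u \<in> topspace Y \<and> \<pi> (s u) = u"
    and orbit: "\<And>y. \<lbrakk>y \<in> topspace Y; \<pi> y \<in> U\<rbrakk> \<Longrightarrow> \<exists>r\<in>A. y = T r (s (\<pi> y))"
    and cont: "\<And>r. r \<in> A \<Longrightarrow> continuous_map (subtopology X U) Y (\<lambda>u. T r (s u))"
    using principal_bundle_local_trivialization[OF pb x] by blast
  \<comment> \<open>\<open>A\<close> is nonempty because the fibre over \<open>x\<close> is.\<close>
  obtain r where r: "r \<in> A" using orbit[of "s x"] s[OF U(2)] U(2) by auto
  have "\<pi> (T r (s u)) = u" if "u \<in> U" for u
    using pb r s[OF that] unfolding principal_bundle_def by auto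
  with U cont[OF r] show thesis using that by blast
qed

lemma principal_bundle_same_fibre:
  assumes pb: "principal_bundle A X Y \<pi> T"
    and y: "y \<in> topspace Y" and y': "y' \<in> topspace Y" and fibre: "\<pi> y = \<pi> y'"
  obtains z r r' where "z \<in> topspace Y" "r \<in> A" "r' \<in> A" "y = T r z" "y' = T r' z"
proof -
  obtain U s where "\<pi> y \<in> U" and s: "\<And>u. u \<in> U \<Longrightarrow> s u \<in> topspace Y \<and> \<pi> (s u) = u"
    and orbit: "\<And>y. \<lbrakk>y \<in> topspace Y; \<pi> y \<in> U\<rbrakk> \<Longrightarrow> \<exists>r\<in>A. y = T r (s (\<pi> y))"
    by (rule principal_bundle_local_trivialization[OF pb principal_bundle_projection_in_base[OF pb y]])
      blast
  moreover have "\<pi> y' \<in> U" using \<open>\<pi> y \<in> U\<close> fibre by simp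
  ultimately obtain r r' where "r \<in> A" "y = T r (s (\<pi> y))" "r' \<in> A" "y' = T r' (s (\<pi> y'))"
    using orbit[OF y] orbit[OF y'] by blast
  moreover have "s (\<pi> y) \<in> topspace Y" using s \<open>\<pi> y \<in> U\<close> by blast
  ultimately show thesis using that[of "s (\<pi> y)" r r'] fibre by argo
qed

definition equivariant_self_map :: "real set \<Rightarrow> 'y topology \<Rightarrow> (real \<Rightarrow> 'y \<Rightarrow> 'y) \<Rightarrow> ('y \<Rightarrow> 'y) \<Rightarrow> bool"
  where "equivariant_self_map A Y T k \<longleftrightarrow>
    k ` topspace Y \<subseteq> topspace Y \<and> (\<forall>r\<in>A. \<forall>y\<in>topspace Y. k (T r y) = T r (k y))"

lemma lift_group_imp_equivariant:
  "gh \<in> lift_group A X Y \<pi> T \<Longrightarrow> equivariant_self_map A Y T gh"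
  unfolding lift_group_def equivariant_self_map_def
  by (auto dest: homeomorphic_imp_surjective_map)

lemma equivariant_self_map_compose:
  "equivariant_self_map A Y T g \<Longrightarrow> equivariant_self_map A Y T h \<Longrightarrow> equivariant_self_map A Y T (g \<circ> h)"
  unfolding equivariant_self_map_def by (auto simp: image_subset_iff)

lemma equivariant_self_map_inverse:
  assumes pb: "principal_bundle A X Y \<pi> T" and k: "equivariant_self_map A Y T k"
    and bij: "bij_betw k (topspace Y) (topspace Y)"
  shows "equivariant_self_map A Y T (restrict (inv_into (topspace Y) k) (topspace Y))"
    (is "equivariant_self_map A Y T ?k'")
proof -
  have k'Y: "?k' y \<in> topspace Y" if "y \<in> topspace Y" for y
    using bij that by (simp add: bij_betw_def inv_into_into)
  have "?k' (T r y) = T r (?k' y)" if r: "r \<in> A" and y: "y \<in> topspace Y" for r y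
  proof -
    have TY: "T r (?k' y) \<in> topspace Y"
      using principal_bundle_action_in_total[OF pb r k'Y[OF y]] .
    have "T r y = k (T r (?k' y))"
      using k r k'Y[OF y] bij_betw_inv_into_right[OF bij y] y
      unfolding equivariant_self_map_def by simp
    then show ?thesis
      using bij_betw_inv_into_left[OF bij TY] principal_bundle_action_in_total[OF pb r y] by simp
  qed
  with k'Y show ?thesis unfolding equivariant_self_map_def by blast
qed

lemma lift_group_bij_betw:
  assumes "gh \<in> lift_group A X Y \<pi> T"
  shows "bij_betw gh (topspace Y) (topspace Y)"
proof -
  have "homeomorphic_map Y Y gh" using assms unfolding lift_group_def by blast
  then show ?thesis
    by (simp add: bij_betw_def homeomorphic_imp_injective_map homeomorphic_imp_surjective_map)
qed

lemma displacement_same_fibre: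
  assumes pb: "principal_bundle A X Y \<pi> T" and sw: "standard_witness A X Y \<pi> T \<alpha> \<theta>"
    and k: "equivariant_self_map A Y T k"
    and y: "y \<in> topspace Y" and y': "y' \<in> topspace Y" and fibre: "\<pi> y = \<pi> y'"
  shows "\<theta> (k y) - \<theta> y = \<theta> (k y') - \<theta> y'"
proof -
  have \<theta>T: "\<theta> (T r z) = \<theta> z + r" if "r \<in> A" "z \<in> topspace Y" for r z
    using sw that unfolding standard_witness_def by blast
  have shift: "\<theta> (k (T r z)) - \<theta> (T r z) = \<theta> (k z) - \<theta> z" if "r \<in> A" "z \<in> topspace Y" for r z
    using k that \<theta>T unfolding equivariant_self_map_def by (auto simp: image_subset_iff)
  obtain z r r' where "z \<in> topspace Y" "r \<in> A" "r' \<in> A" "y = T r z" "y' = T r' z"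
    using principal_bundle_same_fibre[OF pb y y' fibre] .
  then show ?thesis using shift by simp
qed

lemma rot_projection:
  assumes pb: "principal_bundle A X Y \<pi> T" and sw: "standard_witness A X Y \<pi> T \<alpha> \<theta>"
    and k: "equivariant_self_map A Y T k" and y: "y \<in> topspace Y"
  shows "rot Y \<pi> \<theta> (\<pi> y) k = \<theta> (k y) - \<theta> y"
proof -
  define y0 where "y0 = (SOME z. z \<in> topspace Y \<and> \<pi> z = \<pi> y)"
  have "y0 \<in> topspace Y \<and> \<pi> y0 = \<pi> y"
    unfolding y0_def by (rule someI[of _ y]) (use y in simp)
  then show ?thesis
    using displacement_same_fibre[OF pb sw k y, of y0] unfolding rot_def Let_def y0_def[symmetric]
    by simp
qed

lemma rot_compose:
  assumes pb: "principal_bundle A X Y \<pi> T" and sw: "standard_witness A X Y \<pi> T \<alpha> \<theta>"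
    and g: "equivariant_self_map A Y T g" and h: "equivariant_self_map A Y T h"
    and y: "y \<in> topspace Y"
  shows "rot Y \<pi> \<theta> (\<pi> y) (g \<circ> h) = rot Y \<pi> \<theta> (\<pi> (h y)) g + rot Y \<pi> \<theta> (\<pi> y) h"
proof -
  have "h y \<in> topspace Y" using h y unfolding equivariant_self_map_def by blast
  then show ?thesis
    using rot_projection[OF pb sw _ y] rot_projection[OF pb sw g] equivariant_self_map_compose[OF g h] h
    by simp
qed

lemma rot_continuous:
  assumes pb: "principal_bundle A X Y \<pi> T" and sw: "standard_witness A X Y \<pi> T \<alpha> \<theta>"
    and k: "equivariant_self_map A Y T k" and kc: "continuous_map Y Y k"
  shows "continuous_map X euclideanreal (\<lambda>x. rot Y \<pi> \<theta> x k)"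
proof (rule continuous_map_from_local)
  fix x assume "x \<in> topspace X"
  then obtain U \<sigma> where U: "openin X U" "x \<in> U" and \<sigma>: "continuous_map (subtopology X U) Y \<sigma>"
    and lifts: "\<And>u. u \<in> U \<Longrightarrow> \<pi> (\<sigma> u) = u"
    using principal_bundle_local_section[OF pb] by blast
  have \<theta>c: "continuous_map Y euclideanreal \<theta>" using sw unfolding standard_witness_def by blast
  have displacement: "continuous_map (subtopology X U) euclideanreal (\<lambda>u. \<theta> (k (\<sigma> u)) - \<theta> (\<sigma> u))"
    using continuous_map_compose[OF \<sigma> continuous_map_compose[OF kc \<theta>c]]
      continuous_map_compose[OF \<sigma> \<theta>c]
    by (intro continuous_map_diff) (simp_all add: o_def)
  have "\<theta> (k (\<sigma> u)) - \<theta> (\<sigma> u) = rot Y \<pi> \<theta> u k" if u: "u \<in> topspace (subtopology X U)" for u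
  proof -
    have "\<sigma> u \<in> topspace Y" using continuous_map_image_subset_topspace[OF \<sigma>] u by blast
    then show ?thesis using rot_projection[OF pb sw k] lifts[of u] u by fastforce
  qed
  with displacement have "continuous_map (subtopology X U) euclideanreal (\<lambda>u. rot Y \<pi> \<theta> u k)"
    by (rule continuous_map_eq)
  with U show "\<exists>U. openin X U \<and> x \<in> U \<and> continuous_map (subtopology X U) euclideanreal (\<lambda>u. rot Y \<pi> \<theta> u k)"
    by blast
qed

lemma bdd_above_abs_rot:
  assumes pb: "principal_bundle A X Y \<pi> T" and sw: "standard_witness A X Y \<pi> T \<alpha> \<theta>"
    and X: "compact_space X" and gh: "gh \<in> lift_group A X Y \<pi> T"
  shows "bdd_above ((\<lambda>x. \<bar>rot Y \<pi> \<theta> x gh\<bar>) ` topspace X)"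
proof -
  have "homeomorphic_map Y Y gh" using gh unfolding lift_group_def by blast
  then have "continuous_map X euclideanreal (\<lambda>x. rot Y \<pi> \<theta> x gh)"
    using rot_continuous[OF pb sw lift_group_imp_equivariant[OF gh]] homeomorphic_imp_continuous_map
    by blast
  then have "compactin euclideanreal ((\<lambda>x. rot Y \<pi> \<theta> x gh) ` topspace X)"
    using X unfolding compact_space_def by (rule image_compactin[rotated])
  then have "bounded ((\<lambda>x. rot Y \<pi> \<theta> x gh) ` topspace X)"
    by (simp add: compact_imp_bounded)
  then obtain B where "\<forall>x\<in>topspace X. \<bar>rot Y \<pi> \<theta> x gh\<bar> \<le> B"
    unfolding bounded_real by blast
  then show ?thesis unfolding bdd_above_def by blast
qed

lemma abs_rot_image_inverse_subset:
  assumes pb: "principal_bundle A X Y \<pi> T" and sw: "standard_witness A X Y \<pi> T \<alpha> \<theta>"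
    and k: "equivariant_self_map A Y T k" and k': "equivariant_self_map A Y T k'"
    and inverse: "\<And>y. y \<in> topspace Y \<Longrightarrow> k (k' y) = y"
  shows "(\<lambda>x. \<bar>rot Y \<pi> \<theta> x k'\<bar>) ` topspace X \<subseteq> (\<lambda>x. \<bar>rot Y \<pi> \<theta> x k\<bar>) ` topspace X"
proof clarify
  fix x assume "x \<in> topspace X"
  then obtain y where y: "y \<in> topspace Y" "\<pi> y = x"
    using principal_bundle_fibre_nonempty[OF pb] by blast
  have k'y: "k' y \<in> topspace Y" using k' y unfolding equivariant_self_map_def by blast
  have "rot Y \<pi> \<theta> (\<pi> (k' y)) k = - rot Y \<pi> \<theta> x k'"
    using rot_projection[OF pb sw k k'y] rot_projection[OF pb sw k' y(1)] inverse[OF y(1)] y(2)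
    by simp
  then have "\<bar>rot Y \<pi> \<theta> x k'\<bar> = \<bar>rot Y \<pi> \<theta> (\<pi> (k' y)) k\<bar>" by simp
  moreover have "\<pi> (k' y) \<in> topspace X" using principal_bundle_projection_in_base[OF pb k'y] .
  ultimately show "\<bar>rot Y \<pi> \<theta> x k'\<bar> \<in> (\<lambda>x. \<bar>rot Y \<pi> \<theta> x k\<bar>) ` topspace X"
    by (rule image_eqI)
qed

lemma lift_norm_inverse:
  assumes pb: "principal_bundle A X Y \<pi> T" and sw: "standard_witness A X Y \<pi> T \<alpha> \<theta>"
    and gh: "gh \<in> lift_group A X Y \<pi> T"
  shows "lift_norm X Y \<pi> \<theta> (restrict (inv_into (topspace Y) gh) (topspace Y)) = lift_norm X Y \<pi> \<theta> gh"
proof -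
  let ?gh' = "restrict (inv_into (topspace Y) gh) (topspace Y)"
  have bij: "bij_betw gh (topspace Y) (topspace Y)" using lift_group_bij_betw[OF gh] .
  have right: "gh (?gh' y) = y" if "y \<in> topspace Y" for y
    using bij that by (simp add: bij_betw_inv_into_right)
  have left: "?gh' (gh y) = y" if "y \<in> topspace Y" for y
    using bij that by (simp add: bij_betw_inv_into_left bij_betwE)
  note equivariant = lift_group_imp_equivariant[OF gh]
    equivariant_self_map_inverse[OF pb lift_group_imp_equivariant[OF gh] bij]
  have "(\<lambda>x. \<bar>rot Y \<pi> \<theta> x ?gh'\<bar>) ` topspace X = (\<lambda>x. \<bar>rot Y \<pi> \<theta> x gh\<bar>) ` topspace X"
  proof
    show "(\<lambda>x. \<bar>rot Y \<pi> \<theta> x ?gh'\<bar>) ` topspace X \<subseteq> (\<lambda>x. \<bar>rot Y \<pi> \<theta> x gh\<bar>) ` topspace X"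
      using abs_rot_image_inverse_subset[OF pb sw equivariant right] .
    show "(\<lambda>x. \<bar>rot Y \<pi> \<theta> x gh\<bar>) ` topspace X \<subseteq> (\<lambda>x. \<bar>rot Y \<pi> \<theta> x ?gh'\<bar>) ` topspace X"
      using abs_rot_image_inverse_subset[OF pb sw equivariant(2,1) left] .
  qed
  then show ?thesis unfolding lift_norm_def by simp
qed

lemma lift_norm_compose_le:
  assumes pb: "principal_bundle A X Y \<pi> T" and sw: "standard_witness A X Y \<pi> T \<alpha> \<theta>"
    and X: "topspace X \<noteq> {}"
    and g: "equivariant_self_map A Y T g" and h: "equivariant_self_map A Y T h"
    and g_bdd: "bdd_above ((\<lambda>x. \<bar>rot Y \<pi> \<theta> x g\<bar>) ` topspace X)"
    and h_bdd: "bdd_above ((\<lambda>x. \<bar>rot Y \<pi> \<theta> x h\<bar>) ` topspace X)"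
  shows "lift_norm X Y \<pi> \<theta> (g \<circ> h) \<le> lift_norm X Y \<pi> \<theta> g + lift_norm X Y \<pi> \<theta> h"
  unfolding lift_norm_def
proof (rule cSUP_least[OF X])
  fix x assume "x \<in> topspace X"
  then obtain y where y: "y \<in> topspace Y" "\<pi> y = x"
    using principal_bundle_fibre_nonempty[OF pb] by blast
  have "h y \<in> topspace Y" using h y unfolding equivariant_self_map_def by blast
  then have "\<bar>rot Y \<pi> \<theta> (\<pi> (h y)) g\<bar> \<le> (SUP x\<in>topspace X. \<bar>rot Y \<pi> \<theta> x g\<bar>)"
    by (intro cSUP_upper g_bdd principal_bundle_projection_in_base[OF pb])
  moreover have "\<bar>rot Y \<pi> \<theta> x h\<bar> \<le> (SUP x\<in>topspace X. \<bar>rot Y \<pi> \<theta> x h\<bar>)"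
    by (intro cSUP_upper h_bdd \<open>x \<in> topspace X\<close>)
  ultimately show "\<bar>rot Y \<pi> \<theta> x (g \<circ> h)\<bar>
      \<le> (SUP x\<in>topspace X. \<bar>rot Y \<pi> \<theta> x g\<bar>) + (SUP x\<in>topspace X. \<bar>rot Y \<pi> \<theta> x h\<bar>)"
    using rot_compose[OF pb sw g h y(1)] unfolding y(2) by linarith
qed

theorem lemma4p1:
  fixes A :: "real set" and X :: "'x topology" and Y :: "'y topology"
    and \<pi> :: "'y \<Rightarrow> 'x" and T :: "real \<Rightarrow> 'y \<Rightarrow> 'y"
    and a :: "(real \<Rightarrow> 'x) \<Rightarrow> real" and \<alpha> :: "((nat \<Rightarrow> real) \<Rightarrow> 'x) \<Rightarrow> real"
    and \<theta> :: "'y \<Rightarrow> real"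
  assumes "A = \<int> \<or> A = UNIV"
    and "path_connected_space X" and "topspace X \<noteq> {}"
    and "compact_space X"
    and "principal_bundle A X Y \<pi> T"
    and "has_holonomy A X Y \<pi> T a"
    and "standard_cocycle A X Y \<pi> T a \<alpha>"
    and "standard_witness A X Y \<pi> T \<alpha> \<theta>"
  shows "(\<forall>gh\<in>lift_group A X Y \<pi> T. bdd_above ((\<lambda>x. \<bar>rot Y \<pi> \<theta> x gh\<bar>) ` topspace X)) \<and>
         (\<forall>gh\<in>lift_group A X Y \<pi> T.
           lift_norm X Y \<pi> \<theta> (restrict (inv_into (topspace Y) gh) (topspace Y)) = lift_norm X Y \<pi> \<theta> gh) \<and>
         (\<forall>gh\<in>lift_group A X Y \<pi> T. \<forall>hh\<in>lift_group A X Y \<pi> T.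
           lift_norm X Y \<pi> \<theta> (gh \<circ> hh) \<le> lift_norm X Y \<pi> \<theta> gh + lift_norm X Y \<pi> \<theta> hh)"
proof (intro conjI ballI)
  note pb = assms(5) and sw = assms(8)
  show bdd: "bdd_above ((\<lambda>x. \<bar>rot Y \<pi> \<theta> x gh\<bar>) ` topspace X)"
    if "gh \<in> lift_group A X Y \<pi> T" for gh
    using bdd_above_abs_rot[OF pb sw assms(4) that] .
  show "lift_norm X Y \<pi> \<theta> (restrict (inv_into (topspace Y) gh) (topspace Y)) = lift_norm X Y \<pi> \<theta> gh"
    if "gh \<in> lift_group A X Y \<pi> T" for gh
    using lift_norm_inverse[OF pb sw that] .
  show "lift_norm X Y \<pi> \<theta> (gh \<circ> hh) \<le> lift_norm X Y \<pi> \<theta> gh + lift_norm X Y \<pi> \<theta> hh"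
    if "gh \<in> lift_group A X Y \<pi> T" "hh \<in> lift_group A X Y \<pi> T" for gh hh
    using lift_norm_compose_le[OF pb sw assms(3) lift_group_imp_equivariant[OF that(1)]
        lift_group_imp_equivariant[OF that(2)] bdd[OF that(1)] bdd[OF that(2)]] .
qed

end
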